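(* For fixed $k \in \mathbb{N}$, fixed information resource $f$, and decomposable probability-of-success metric $\phi$, define \[ \tau = \{T \mid T \subseteq \Omega, |T| = k\}, \quad \tau_{q_{\text{min}}} = \{T \mid T \subseteq \Omega, |T| = k, \phi(T,f) \geq q_{\text{min}} \}. \] Then \[ \frac{|\tau_{q_{\text{min}}}|}{|\tau|} \leq \frac{p}{q_{\text{min}}}, \] where $p = \frac{k}{|\Omega|}$.
   Context: Algorithmic search framework: finite discrete search space $\Omega$, target sets $T\subseteq\Omega$ with indicator vectors $\mathbf{t}$, information resource $f$, and a fixed search algorithm. A probability-of-success metric $\phi$ is decomposable if there exists a probability vector $\mathbf{P}_{\phi,f}$ over $\Omega$, not a function of the target, with $\phi(t,f)=\mathbf{t}^{\top}\mathbf{P}_{\phi,f}=P_\phi(X\in t\mid f)$. $q_{\text{min}}\in(0,1]$ is a success threshold. *)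

theory Defs
  imports "HOL-Analysis.Analysis"
begin

definition prob_vector :: "('a::finite \<Rightarrow> real) \<Rightarrow> bool" where
  "prob_vector P \<longleftrightarrow> (\<forall>x. 0 \<le> P x) \<and> (\<Sum>x\<in>UNIV. P x) = 1"

text \<open>phi is decomposable (for information resource f): there is a probability
vector P over Omega, independent of the target, with phi(T,f) = t^T P = sum of P over T.\<close>
definition decomposable :: "('a::finite set \<Rightarrow> 'f \<Rightarrow> real) \<Rightarrow> 'f \<Rightarrow> bool" where
  "decomposable phi f \<longleftrightarrow> (\<exists>P. prob_vector P \<and> (\<forall>T. phi T f = (\<Sum>x\<in>T. P x)))"

end

theory Submission
  imports Defs
begin

text \<open>By double counting, every point of the search space lies in the same
number of \<open>k\<close>-subsets, so averaging a decomposable metric over all \<open>k\<close>-subsets gives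
\<open>k/|\<Omega>|\<close> times the total mass 1 of the probability vector, i.e. \<open>p\<close>. Markov's inequality
for this average bounds the fraction of targets with success probability at least
\<open>q\<^sub>m\<^sub>i\<^sub>n\<close> by \<open>p/q\<^sub>m\<^sub>i\<^sub>n\<close>.\<close>

lemma card_subsets_containing:
  assumes "finite A" and "x \<in> A"
  shows "card A * card {T. T \<subseteq> A \<and> card T = k \<and> x \<in> T} = k * (card A choose k)"
proof (cases "k = 0")
  case True
  have none: "{T. T \<subseteq> A \<and> card T = k \<and> x \<in> T} = {}"
    using True assms(1) by (auto dest: finite_subset)
  show ?thesis unfolding none using True by simp
next
  case False
  have insert_image: "{T. T \<subseteq> A \<and> card T = k \<and> x \<in> T}
      = insert x ` {B. B \<subseteq> A - {x} \<and> card B = k - 1}"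
  proof (intro set_eqI iffI)
    fix T assume "T \<in> {T. T \<subseteq> A \<and> card T = k \<and> x \<in> T}"
    then have "T - {x} \<subseteq> A - {x}" "card (T - {x}) = k - 1" "T = insert x (T - {x})"
      by auto
    then show "T \<in> insert x ` {B. B \<subseteq> A - {x} \<and> card B = k - 1}" by blast
  next
    fix T assume "T \<in> insert x ` {B. B \<subseteq> A - {x} \<and> card B = k - 1}"
    then obtain B where "B \<subseteq> A - {x}" "card B = k - 1" "T = insert x B" by auto
    moreover have "finite B" using \<open>B \<subseteq> A - {x}\<close> assms(1) finite_subset by blast
    moreover have "x \<notin> B" using \<open>B \<subseteq> A - {x}\<close> by blast
    ultimately show "T \<in> {T. T \<subseteq> A \<and> card T = k \<and> x \<in> T}"
      using False assms(2) by auto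
  qed
  have "inj_on (insert x) {B. B \<subseteq> A - {x} \<and> card B = k - 1}"
    by (rule inj_onI) (auto simp: insert_ident)
  then have "card {T. T \<subseteq> A \<and> card T = k \<and> x \<in> T} = (card A - 1) choose (k - 1)"
    using assms by (simp add: insert_image card_image n_subsets card_Diff_singleton)
  then show ?thesis using times_binomial_minus1_eq[of k "card A"] False by simp
qed

lemma sum_sum_over_subsets_of_card:
  fixes w :: "'a \<Rightarrow> 'b::comm_semiring_1"
  assumes "finite A"
  shows "of_nat (card A) * (\<Sum>T | T \<subseteq> A \<and> card T = k. \<Sum>x\<in>T. w x)
           = of_nat (k * (card A choose k)) * (\<Sum>x\<in>A. w x)"
proof -
  let ?S = "{T. T \<subseteq> A \<and> card T = k}"
  have "finite ?S" using assms by simp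
  have restrict: "(\<Sum>x\<in>T. w x) = (\<Sum>x\<in>A. if x \<in> T then w x else 0)" if "T \<subseteq> A" for T
    using sum.inter_restrict[OF assms, of w T] that by (simp add: Int_absorb1)
  have count: "(\<Sum>T\<in>?S. if x \<in> T then w x else 0)
      = of_nat (card {T. T \<subseteq> A \<and> card T = k \<and> x \<in> T}) * w x" for x
    using sum.inter_filter[OF \<open>finite ?S\<close>, of "\<lambda>_. w x" "\<lambda>T. x \<in> T"]
    by (simp add: conj_assoc)
  have "(\<Sum>T\<in>?S. \<Sum>x\<in>T. w x) = (\<Sum>T\<in>?S. \<Sum>x\<in>A. if x \<in> T then w x else 0)"
    by (rule sum.cong[OF refl]) (rule restrict, blast)
  also have "\<dots> = (\<Sum>x\<in>A. \<Sum>T\<in>?S. if x \<in> T then w x else 0)"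
    by (rule sum.swap)
  also have "\<dots> = (\<Sum>x\<in>A. of_nat (card {T. T \<subseteq> A \<and> card T = k \<and> x \<in> T}) * w x)"
    by (simp only: count)
  finally have "of_nat (card A) * (\<Sum>T\<in>?S. \<Sum>x\<in>T. w x)
      = (\<Sum>x\<in>A. of_nat (card A * card {T. T \<subseteq> A \<and> card T = k \<and> x \<in> T}) * w x)"
    by (simp add: sum_distrib_left mult.assoc)
  also have "\<dots> = (\<Sum>x\<in>A. of_nat (k * (card A choose k)) * w x)"
    using assms by (intro sum.cong refl) (simp only: card_subsets_containing)
  finally show ?thesis by (simp only: sum_distrib_left)
qed

lemma card_superlevel_set_le_sum:
  fixes g :: "'a \<Rightarrow> 'b::linordered_semidom"
  assumes "finite S" and "\<And>T. T \<in> S \<Longrightarrow> 0 \<le> g T"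
  shows "of_nat (card {T \<in> S. q \<le> g T}) * q \<le> (\<Sum>T\<in>S. g T)"
proof -
  have "of_nat (card {T \<in> S. q \<le> g T}) * q = (\<Sum>T | T \<in> S \<and> q \<le> g T. q)" by simp
  also have "\<dots> \<le> (\<Sum>T | T \<in> S \<and> q \<le> g T. g T)" by (rule sum_mono) simp
  also have "\<dots> \<le> (\<Sum>T\<in>S. g T)" using assms by (intro sum_mono2) auto
  finally show ?thesis .
qed

theorem theorem3:
  fixes phi :: "'a::finite set \<Rightarrow> 'f \<Rightarrow> real" and f :: 'f and k :: nat and qmin :: real
  assumes "decomposable phi f"
    and "0 < qmin" and "qmin \<le> 1"
  shows "real (card {T :: 'a set. card T = k \<and> phi T f \<ge> qmin})
           / real (card {T :: 'a set. card T = k})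
         \<le> (real k / real CARD('a)) / qmin"
proof -
  obtain P where "prob_vector P" and phi_eq: "\<And>T. phi T f = (\<Sum>x\<in>T. P x)"
    using assms(1) unfolding decomposable_def by blast
  then have P_nonneg: "\<And>x. 0 \<le> P x" and P_total: "(\<Sum>x\<in>UNIV. P x) = 1"
    unfolding prob_vector_def by auto
  let ?tau = "{T :: 'a set. card T = k}"
  let ?tau_q = "{T :: 'a set. card T = k \<and> phi T f \<ge> qmin}"
  have average: "real CARD('a) * (\<Sum>T\<in>?tau. phi T f) = real k * real (card ?tau)"
    using sum_sum_over_subsets_of_card[of "UNIV :: 'a set" P k] n_subsets[of "UNIV :: 'a set" k]
    by (simp add: phi_eq P_total)
  have markov: "real (card ?tau_q) * qmin \<le> (\<Sum>T\<in>?tau. phi T f)"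
    using card_superlevel_set_le_sum[of ?tau "\<lambda>T. phi T f" qmin]
    by (simp add: phi_eq P_nonneg sum_nonneg conj_commute)
  have "real (card ?tau_q) * (real CARD('a) * qmin) \<le> real k * real (card ?tau)"
    using mult_left_mono[OF markov, of "real CARD('a)"] average by (simp add: ac_simps)
  moreover have "0 < real CARD('a)" by simp
  ultimately show ?thesis
    using assms(2) by (cases "card ?tau = 0") (simp_all add: divide_simps ac_simps)
qed

end
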